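(* Let $L>0$, let $n$ be an even positive integer, $\Delta x=2L/n$, and $x_j=-L+j\Delta x$ for $0\le j\le n-1$. Let $k\ge1$ and let $\omega_1,\dots,\omega_k$ be measures $\omega_i=\sum_{j=0}^{n-1}a^i_j\,\delta_{x_j}$ with $a^i_j\ge0$. Fix $C\in[0,1]$ and define for $\varepsilon>0$ $$\delta(\varepsilon)=C+\int_\varepsilon^\infty(1-e^{\varepsilon-s})\,(\omega_1*\cdots*\omega_k)(s)\,ds,$$ and let $\widetilde\delta(\varepsilon)$ be the output of the following algorithm: with $\boldsymbol a^i=(a^i_0,\dots,a^i_{n-1})^{\mathrm T}$, compute $\boldsymbol b=D\,\mathcal F^{-1}\big(\mathcal F(D\boldsymbol a^1)\odot\cdots\odot\mathcal F(D\boldsymbol a^k)\big)$ and set $$\widetilde\delta(\varepsilon)=C+\sum_{\ell\in\{0,\dots,n-1\}:\,x_\ell>\varepsilon}\big(1-e^{\varepsilon-x_\ell}\big)\,b_\ell .$$ Let $\alpha^+(\lambda)=\sum_{i=1}^k\log\sum_{j}a^i_je^{\lambda x_j}$ and $\alpha^-(\lambda)=\sum_{i=1}^k\log\sum_j a^i_je^{-\lambda x_j}$. Then for all $\varepsilon>0$ and all $\lambda>0$, $$\big|\delta(\varepsilon)-\widetilde\delta(\varepsilon)\big|\le\big(e^{\alpha^+(\lambda)}+e^{\alpha^-(\lambda)}\big)\frac{e^{-L\lambda}}{1-e^{-2L\lambda}}.$$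
   Context: $\delta_t$ denotes the Dirac point mass at $t$; convolution of discrete measures is $\big(\sum_i a_i\delta_{t_i}\big)*\big(\sum_j b_j\delta_{u_j}\big)=\sum_{i,j}a_ib_j\delta_{t_i+u_j}$, and $\int_\varepsilon^\infty h(s)\mu(s)ds$ for a discrete measure means the sum of $h$ times the masses of the atoms in $[\varepsilon,\infty)$. $D=\begin{bmatrix}0&I_{n/2}\\ I_{n/2}&0\end{bmatrix}$; $(\mathcal F x)_k=\sum_{j=0}^{n-1}x_je^{-\mathrm i2\pi kj/n}$, $(\mathcal F^{-1}w)_k=\frac1n\sum_{j=0}^{n-1}w_je^{\mathrm i2\pi kj/n}$; $\odot$ is the entrywise product. In the paper, $\omega_i$ are privacy loss distributions of the composed mechanisms, $C=1-\prod_\ell(1-\delta_\ell(\infty))$ accounts for infinite privacy loss, and $\delta(\varepsilon)$ is the tight DP bound. *)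

theory Defs
  imports "HOL-Analysis.Analysis"
begin

definition grid :: "real \<Rightarrow> nat \<Rightarrow> nat \<Rightarrow> real" where
  "grid L n j = - L + real j * (2 * L / real n)"

text \<open>Swap matrix D = [[0, I],[I, 0]] acting on vectors of length n (indices < n).\<close>
definition swapD :: "nat \<Rightarrow> (nat \<Rightarrow> complex) \<Rightarrow> nat \<Rightarrow> complex" where
  "swapD n x j = x ((j + n div 2) mod n)"

definition dft :: "nat \<Rightarrow> (nat \<Rightarrow> complex) \<Rightarrow> nat \<Rightarrow> complex" where
  "dft n x m = (\<Sum>j<n. x j * exp (- \<i> * 2 * complex_of_real pi * of_nat m * of_nat j / of_nat n))"

definition idft :: "nat \<Rightarrow> (nat \<Rightarrow> complex) \<Rightarrow> nat \<Rightarrow> complex" where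
  "idft n w m = (1 / of_nat n) * (\<Sum>j<n. w j * exp (\<i> * 2 * complex_of_real pi * of_nat m * of_nat j / of_nat n))"

text \<open>Exact tight bound: C + integral over [eps,\<infinity>) of (1 - e^(eps-s)) against the
  k-fold convolution of omega_i = \<Sum>_j a i j \<delta>_{x_j}; the convolution has an atom at
  x_{j_1}+...+x_{j_k} of mass a 1 j_1 * ... * a k j_k for every tuple (j_1,...,j_k).\<close>
definition delta_exact :: "real \<Rightarrow> nat \<Rightarrow> nat \<Rightarrow> (nat \<Rightarrow> nat \<Rightarrow> real) \<Rightarrow> real \<Rightarrow> real \<Rightarrow> real" where
  "delta_exact L n k a C eps = C +
     (\<Sum>js\<in>({1..k} \<rightarrow>\<^sub>E {..<n}).
        (let s = (\<Sum>i\<in>{1..k}. grid L n (js i))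
         in if eps \<le> s then (1 - exp (eps - s)) * (\<Prod>i\<in>{1..k}. a i (js i)) else 0))"

definition fft_b :: "nat \<Rightarrow> nat \<Rightarrow> (nat \<Rightarrow> nat \<Rightarrow> real) \<Rightarrow> nat \<Rightarrow> complex" where
  "fft_b n k a = swapD n (idft n (\<lambda>m. \<Prod>i\<in>{1..k}. dft n (swapD n (\<lambda>j. complex_of_real (a i j))) m))"

definition delta_fft :: "real \<Rightarrow> nat \<Rightarrow> nat \<Rightarrow> (nat \<Rightarrow> nat \<Rightarrow> real) \<Rightarrow> real \<Rightarrow> real \<Rightarrow> complex" where
  "delta_fft L n k a C eps = complex_of_real C +
     (\<Sum>l\<in>{l. l < n \<and> grid L n l > eps}. complex_of_real (1 - exp (eps - grid L n l)) * fft_b n k a l)"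

definition alpha_plus :: "real \<Rightarrow> nat \<Rightarrow> nat \<Rightarrow> (nat \<Rightarrow> nat \<Rightarrow> real) \<Rightarrow> real \<Rightarrow> real" where
  "alpha_plus L n k a lam = (\<Sum>i\<in>{1..k}. ln (\<Sum>j<n. a i j * exp (lam * grid L n j)))"

definition alpha_minus :: "real \<Rightarrow> nat \<Rightarrow> nat \<Rightarrow> (nat \<Rightarrow> nat \<Rightarrow> real) \<Rightarrow> real \<Rightarrow> real" where
  "alpha_minus L n k a lam = (\<Sum>i\<in>{1..k}. ln (\<Sum>j<n. a i j * exp (- lam * grid L n j)))"

end

(*
  Both bounds are C plus a sum over index tuples js of the mass a 1 (js 1) * ... * a k (js k)
  times the hockey-stick function s \<mapsto> (1 - e^(eps - s))\<^sub>+ evaluated at a point.  For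
  delta_exact that point is the atom s = x_(js 1) + ... + x_(js k) of the convolution.  For the
  FFT output it is the grid point congruent to s modulo 2L: the DFT turns the entrywise product
  into a cyclic convolution, and D shifts indices by n/2 so that the grid is centred at 0.  The
  two points coincide when s \<in> [-L, L), and otherwise the terms differ by at most 1.  So the
  error is at most the mass of the convolution outside [-L, L).  A Chernoff bound estimates that
  mass by e^(-L lam) (E e^(lam S) + E e^(-lam S)) = e^(-L lam) (e^alpha+ + e^alpha-), which is
  even smaller than the claimed bound because 1 - e^(-2 L lam) \<le> 1.
*)

theory Submission
  imports Defs
begin

definition unit_root :: "nat \<Rightarrow> int \<Rightarrow> complex" where
  "unit_root n t = exp (2 * of_real pi * \<i> * of_int t / of_nat n)"

lemma unit_root_add: "unit_root n (s + t) = unit_root n s * unit_root n t"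
  unfolding unit_root_def by (simp add: exp_add[symmetric] add_divide_distrib distrib_left)

lemma unit_root_0 [simp]: "unit_root n 0 = 1"
  unfolding unit_root_def by simp

lemma unit_root_power: "unit_root n (int m * t) = unit_root n t ^ m"
  by (induction m) (simp_all add: distrib_right unit_root_add)

lemma prod_unit_root: "(\<Prod>i\<in>A. unit_root n (f i)) = unit_root n (\<Sum>i\<in>A. f i)"
  by (induction A rule: infinite_finite_induct) (simp_all add: unit_root_add)

lemma unit_root_eq_1_iff:
  assumes "n > 0"
  shows "unit_root n t = 1 \<longleftrightarrow> int n dvd t"
proof
  assume "unit_root n t = 1"
  then obtain z :: int where "Im (2 * of_real pi * \<i> * of_int t / of_nat n) = of_int (2 * z) * pi"
    unfolding unit_root_def exp_eq_1 by blast
  then have "real_of_int t = real_of_int (z * int n)"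
    using assms by (simp add: field_simps)
  then show "int n dvd t" by (metis dvd_triv_right of_int_eq_iff)
next
  assume "int n dvd t"
  then obtain c where "t = int n * c" by blast
  then have "unit_root n t = exp ((2 * of_int c * of_real pi) * \<i>)"
    unfolding unit_root_def using assms by (simp add: field_simps)
  then show "unit_root n t = 1" by (simp add: exp_eq_1)
qed

lemma unit_root_cong:
  assumes "n > 0" "s mod int n = t mod int n"
  shows "unit_root n s = unit_root n t"
proof -
  have "int n dvd s - t" using assms(2) by (simp add: mod_eq_dvd_iff)
  then have "unit_root n (s - t) = 1" using unit_root_eq_1_iff[OF assms(1)] by blast
  then show ?thesis using unit_root_add[of n "s - t" t] by simp
qed

lemma sum_unit_root:
  assumes "n > 0"
  shows "(\<Sum>m<n. unit_root n (int m * t)) = (if int n dvd t then of_nat n else 0)"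
proof (cases "int n dvd t")
  case True
  then have "unit_root n t = 1" using unit_root_eq_1_iff[OF assms] by blast
  then show ?thesis using True by (simp add: unit_root_power)
next
  case False
  have "unit_root n t ^ n = 1"
    using unit_root_eq_1_iff[OF assms, of "int n * t"] by (simp add: unit_root_power)
  then show ?thesis
    using False by (simp add: unit_root_power unit_root_eq_1_iff[OF assms] sum_gp_strict)
qed

lemma dft_unit_root: "dft n x m = (\<Sum>j<n. x j * unit_root n (- (int m * int j)))"
  unfolding dft_def unit_root_def by (intro sum.cong refl arg_cong2[where f="(*)"] arg_cong[where f=exp]) (simp add: field_simps)

lemma idft_unit_root: "idft n w m = 1 / of_nat n * (\<Sum>j<n. w j * unit_root n (int m * int j))"
  unfolding idft_def unit_root_def
  by (intro sum.cong refl arg_cong2[where f="(*)"] arg_cong[where f=exp]) (simp add: field_simps)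

lemma sum_lessThan_shift_mod:
  fixes n h :: nat
  assumes "n > 0"
  shows "(\<Sum>j<n. f ((j + h) mod n)) = (\<Sum>j<n. f j)"
proof -
  have "inj_on (\<lambda>j. (j + h) mod n) {..<n}"
  proof (rule inj_onI)
    fix x y assume "x \<in> {..<n}" "y \<in> {..<n}" "(x + h) mod n = (y + h) mod n"
    moreover from this have "(int x + int h) mod int n = (int y + int h) mod int n"
      by (metis of_nat_add zmod_int)
    then have "int x mod int n = int y mod int n"
      by (metis add_diff_cancel_right' mod_diff_left_eq)
    ultimately show "x = y" by (simp add: zmod_int)
  qed
  moreover have "(\<lambda>j. (j + h) mod n) ` {..<n} = {..<n}"
    using assms calculation by (intro endo_inj_surj) auto
  ultimately show ?thesis using sum.reindex[of "\<lambda>j. (j + h) mod n" "{..<n}" f] by simp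
qed

lemma dft_shift:
  assumes "n > 0"
  shows "dft n (\<lambda>j. x ((j + h) mod n)) m = unit_root n (int m * int h) * dft n x m"
proof -
  have "unit_root n (- (int m * int j)) = unit_root n (int m * int h) * unit_root n (- (int m * int ((j + h) mod n)))" for j
  proof -
    have "(int m * int h - int m * int ((j + h) mod n)) mod int n
        = (int m * int h - (int m * int ((j + h) mod n)) mod int n) mod int n"
      by (simp add: mod_diff_right_eq)
    also have "\<dots> = (int m * int h - int m * (int j + int h)) mod int n"
      by (simp add: zmod_int mod_mult_right_eq mod_diff_right_eq)
    also have "\<dots> = (- (int m * int j)) mod int n"
      by (simp add: algebra_simps)
    finally have "unit_root n (int m * int h - int m * int ((j + h) mod n)) = unit_root n (- (int m * int j))"
      by (rule unit_root_cong[OF assms])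
    then show ?thesis
      by (simp add: unit_root_add[symmetric])
  qed
  then have "dft n (\<lambda>j. x ((j + h) mod n)) m
      = unit_root n (int m * int h) * (\<Sum>j<n. x ((j + h) mod n) * unit_root n (- (int m * int ((j + h) mod n))))"
    by (simp add: dft_unit_root sum_distrib_left algebra_simps)
  also have "\<dots> = unit_root n (int m * int h) * dft n x m"
    by (simp add: sum_lessThan_shift_mod[OF assms, of "\<lambda>j. x j * unit_root n (- (int m * int j))"] dft_unit_root)
  finally show ?thesis .
qed

lemma idft_modulate:
  "idft n (\<lambda>m. unit_root n (int m * int c) * w m) l = idft n w (l + c)"
proof -
  have "unit_root n (int j * int c) * unit_root n (int l * int j) = unit_root n (int (l + c) * int j)" for j
    unfolding unit_root_add[symmetric] by (simp add: algebra_simps)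
  then show ?thesis
    unfolding idft_unit_root by (simp add: mult.assoc mult.left_commute)
qed

lemma idft_prod_dft:
  fixes x :: "nat \<Rightarrow> nat \<Rightarrow> complex"
  assumes "n > 0" "finite I"
  shows "idft n (\<lambda>m. \<Prod>i\<in>I. dft n (x i) m) l
    = (\<Sum>js\<in>I \<rightarrow>\<^sub>E {..<n}.
         if int n dvd (int l - (\<Sum>i\<in>I. int (js i))) then \<Prod>i\<in>I. x i (js i) else 0)"
proof -
  define J where "J = I \<rightarrow>\<^sub>E {..<n}"
  define S where "S js = (\<Sum>i\<in>I. int (js i))" for js
  define X where "X js = (\<Prod>i\<in>I. x i (js i))" for js
  have prod_dft: "(\<Prod>i\<in>I. dft n (x i) m) = (\<Sum>js\<in>J. X js * unit_root n (- (int m * S js)))" for m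
  proof -
    have "(\<Prod>i\<in>I. dft n (x i) m)
        = (\<Sum>js\<in>J. \<Prod>i\<in>I. x i (js i) * unit_root n (- (int m * int (js i))))"
      unfolding dft_unit_root J_def using assms(2) by (rule prod_sum_PiE) auto
    also have "\<dots> = (\<Sum>js\<in>J. X js * unit_root n (- (int m * S js)))"
      by (simp add: prod.distrib prod_unit_root X_def S_def sum_negf sum_distrib_left)
    finally show ?thesis .
  qed
  have "unit_root n (- (int m * S js)) * unit_root n (int l * int m) = unit_root n (int m * (int l - S js))"
    for m js unfolding unit_root_add[symmetric] by (simp add: algebra_simps)
  then have "idft n (\<lambda>m. \<Prod>i\<in>I. dft n (x i) m) l
      = (\<Sum>js\<in>J. X js * (1 / of_nat n * (\<Sum>m<n. unit_root n (int m * (int l - S js)))))"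
    unfolding idft_unit_root prod_dft sum_distrib_right sum_distrib_left
    by (subst sum.swap) (simp add: mult.assoc mult.left_commute)
  also have "\<dots> = (\<Sum>js\<in>J. if int n dvd (int l - S js) then X js else 0)"
    using assms(1) by (intro sum.cong refl) (simp add: sum_unit_root)
  finally show ?thesis unfolding J_def S_def X_def .
qed

text \<open>The index l < n whose grid point is congruent to the atom of js modulo 2L.\<close>
definition alias_index :: "nat \<Rightarrow> nat \<Rightarrow> (nat \<Rightarrow> nat) \<Rightarrow> nat" where
  "alias_index n k js = nat (((\<Sum>i\<in>{1..k}. int (js i)) - int (Suc k * (n div 2))) mod int n)"

lemma alias_index_less: "n > 0 \<Longrightarrow> alias_index n k js < n"
  unfolding alias_index_def by (simp add: nat_less_iff)

lemma dvd_diff_iff_eq_nat_mod: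
  assumes "n > 0" "l < n"
  shows "int n dvd (int l - t) \<longleftrightarrow> l = nat (t mod int n)"
proof -
  have "int n dvd (int l - t) \<longleftrightarrow> int l = t mod int n"
    using assms by (simp add: mod_eq_dvd_iff[symmetric])
  also have "\<dots> \<longleftrightarrow> l = nat (t mod int n)"
    using assms(1) by auto
  finally show ?thesis .
qed

lemma dvd_iff_eq_alias_index:
  assumes "n > 0" "l < n"
  shows "int n dvd (int ((l + n div 2) mod n + k * (n div 2)) - (\<Sum>i\<in>{1..k}. int (js i)))
    \<longleftrightarrow> l = alias_index n k js"
proof -
  define h where "h = n div 2"
  define t where "t = (\<Sum>i\<in>{1..k}. int (js i)) - int (Suc k * h)"
  have split: "int ((l + h) mod n + k * h) - (\<Sum>i\<in>{1..k}. int (js i))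
      = (int l - t) + (int ((l + h) mod n) - (int l + int h))"
    unfolding t_def by simp
  have "int n dvd int ((l + h) mod n) - (int l + int h)"
    by (simp add: zmod_int mod_eq_dvd_iff[symmetric])
  then have "int n dvd (int ((l + h) mod n + k * h) - (\<Sum>i\<in>{1..k}. int (js i)))
      \<longleftrightarrow> int n dvd (int l - t)"
    unfolding split by (rule dvd_add_left_iff)
  also have "\<dots> \<longleftrightarrow> l = alias_index n k js"
    unfolding dvd_diff_iff_eq_nat_mod[OF assms] alias_index_def t_def h_def ..
  finally show ?thesis unfolding h_def .
qed

lemma fft_b_eq_sum_alias:
  assumes "n > 0" "l < n"
  shows "fft_b n k a l = (\<Sum>js\<in>{1..k} \<rightarrow>\<^sub>E {..<n}.
           if l = alias_index n k js then \<Prod>i\<in>{1..k}. complex_of_real (a i (js i)) else 0)"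
proof -
  define h where "h = n div 2"
  have "(\<Prod>i\<in>{1..k}. dft n (swapD n (\<lambda>j. complex_of_real (a i j))) m)
      = unit_root n (int m * int (k * h)) * (\<Prod>i\<in>{1..k}. dft n (\<lambda>j. complex_of_real (a i j)) m)" for m
  proof -
    have "dft n (swapD n (\<lambda>j. complex_of_real (a i j))) m
        = unit_root n (int m * int h) * dft n (\<lambda>j. complex_of_real (a i j)) m" for i
      unfolding swapD_def h_def by (rule dft_shift[OF assms(1)])
    moreover have "unit_root n (int m * int h) ^ k = unit_root n (int m * int (k * h))"
      by (simp add: unit_root_power[symmetric] algebra_simps)
    ultimately show ?thesis by (simp add: prod.distrib)
  qed
  then have "fft_b n k a l
      = idft n (\<lambda>m. \<Prod>i\<in>{1..k}. dft n (\<lambda>j. complex_of_real (a i j)) m) ((l + h) mod n + k * h)"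
    unfolding fft_b_def swapD_def h_def by (simp add: idft_modulate[symmetric] del: of_nat_mult)
  also have "\<dots> = (\<Sum>js\<in>{1..k} \<rightarrow>\<^sub>E {..<n}.
           if int n dvd (int ((l + h) mod n + k * h) - (\<Sum>i\<in>{1..k}. int (js i)))
           then \<Prod>i\<in>{1..k}. complex_of_real (a i (js i)) else 0)"
    using assms(1) by (rule idft_prod_dft) simp
  also have "\<dots> = (\<Sum>js\<in>{1..k} \<rightarrow>\<^sub>E {..<n}.
           if l = alias_index n k js then \<Prod>i\<in>{1..k}. complex_of_real (a i (js i)) else 0)"
    by (intro sum.cong refl if_cong) (rule dvd_iff_eq_alias_index[OF assms, folded h_def])
  finally show ?thesis .
qed

definition atom_pos :: "real \<Rightarrow> nat \<Rightarrow> nat \<Rightarrow> (nat \<Rightarrow> nat) \<Rightarrow> real" where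
  "atom_pos L n k js = (\<Sum>i\<in>{1..k}. grid L n (js i))"

definition atom_mass :: "nat \<Rightarrow> (nat \<Rightarrow> nat \<Rightarrow> real) \<Rightarrow> (nat \<Rightarrow> nat) \<Rightarrow> real" where
  "atom_mass k a js = (\<Prod>i\<in>{1..k}. a i (js i))"

definition hockey_stick :: "real \<Rightarrow> real \<Rightarrow> real" where
  "hockey_stick eps s = (if eps \<le> s then 1 - exp (eps - s) else 0)"

lemma hockey_stick_bounds: "0 \<le> hockey_stick eps s" "hockey_stick eps s \<le> 1"
  unfolding hockey_stick_def by auto

lemma atom_mass_nonneg:
  assumes "\<And>i j. i \<in> {1..k} \<Longrightarrow> j < n \<Longrightarrow> a i j \<ge> 0" "js \<in> {1..k} \<rightarrow>\<^sub>E {..<n}"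
  shows "atom_mass k a js \<ge> 0"
  unfolding atom_mass_def using assms by (auto intro!: prod_nonneg simp: PiE_iff)

lemma delta_exact_eq:
  "delta_exact L n k a C eps
    = C + (\<Sum>js\<in>{1..k} \<rightarrow>\<^sub>E {..<n}. atom_mass k a js * hockey_stick eps (atom_pos L n k js))"
  unfolding delta_exact_def Let_def hockey_stick_def atom_mass_def atom_pos_def
  by (intro arg_cong2[where f="(+)"] refl sum.cong) auto

text \<open>The strict inequality eps < x_l in delta_fft is harmless: the hockey stick vanishes at eps.\<close>
lemma delta_fft_eq:
  assumes "n > 0"
  shows "delta_fft L n k a C eps = complex_of_real (C +
    (\<Sum>js\<in>{1..k} \<rightarrow>\<^sub>E {..<n}. atom_mass k a js * hockey_stick eps (grid L n (alias_index n k js))))"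
proof -
  define J where "J = {1..k} \<rightarrow>\<^sub>E {..<n}"
  define S where "S = {l. l < n \<and> grid L n l > eps}"
  define g where "g l = complex_of_real (1 - exp (eps - grid L n l))" for l
  have "g l * fft_b n k a l
      = (\<Sum>js\<in>J. if l = alias_index n k js then g l * of_real (atom_mass k a js) else 0)" if "l \<in> S" for l
    using that unfolding S_def J_def atom_mass_def
    by (simp add: fft_b_eq_sum_alias[OF assms] sum_distrib_left if_distrib cong: if_cong)
  then have "delta_fft L n k a C eps
      = of_real C + (\<Sum>l\<in>S. \<Sum>js\<in>J. if l = alias_index n k js then g l * of_real (atom_mass k a js) else 0)"
    unfolding delta_fft_def S_def[symmetric] g_def[symmetric] by simp
  also have "\<dots> = of_real C + (\<Sum>js\<in>J. if alias_index n k js \<in> S then g (alias_index n k js) * of_real (atom_mass k a js) else 0)"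
    by (subst sum.swap) (simp add: sum.delta' S_def)
  also have "\<dots> = complex_of_real (C + (\<Sum>js\<in>J. atom_mass k a js * hockey_stick eps (grid L n (alias_index n k js))))"
    using alias_index_less[OF assms] by (auto simp: S_def g_def hockey_stick_def intro!: sum.cong)
  finally show ?thesis unfolding J_def .
qed

lemma grid_bounds:
  assumes "L > 0" "j < n"
  shows "- L \<le> grid L n j" "grid L n j < L"
proof -
  have "real j * (2 * L / real n) < real n * (2 * L / real n)"
    using assms by (intro mult_strict_right_mono) auto
  then show "grid L n j < L" using assms unfolding grid_def by simp
  show "- L \<le> grid L n j" using assms unfolding grid_def by simp
qed

lemma grid_alias_index:
  assumes "n > 0" "even n"
  shows "\<exists>z::int. grid L n (alias_index n k js) = atom_pos L n k js + 2 * L * of_int z"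
proof -
  define h where "h = n div 2"
  define S where "S = (\<Sum>i\<in>{1..k}. int (js i))"
  define t where "t = S - int (Suc k * h)"
  have n: "real n = 2 * real h" unfolding h_def using assms by auto
  have index_eq: "real (alias_index n k js) = of_int t - real n * of_int (t div int n)"
  proof -
    have "real (alias_index n k js) = of_int (t mod int n)"
      using assms(1) unfolding alias_index_def t_def S_def h_def by simp
    then show ?thesis by (simp add: minus_div_mult_eq_mod[symmetric] algebra_simps)
  qed
  have "atom_pos L n k js = (\<Sum>i\<in>{1..k}. - L) + (\<Sum>i\<in>{1..k}. real (js i)) * (2 * L / real n)"
    unfolding atom_pos_def grid_def sum.distrib sum_distrib_right ..
  then have pos: "atom_pos L n k js = of_int S * (2 * L / real n) - real k * L"
    unfolding S_def by simp
  have "grid L n (alias_index n k js) = atom_pos L n k js + 2 * L * of_int (- (t div int n) - 1)"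
    unfolding grid_def index_eq pos t_def using assms(1) n by (simp add: field_simps)
  then show ?thesis by blast
qed

lemma abs_hockey_stick_diff_le:
  assumes "L > 0" "- L \<le> r" "r < L" "r = s + 2 * L * of_int z"
  shows "\<bar>hockey_stick eps s - hockey_stick eps r\<bar> \<le> of_bool (s \<notin> {-L..<L})"
proof (cases "s \<in> {-L..<L}")
  case True
  then have "\<bar>2 * L * of_int z\<bar> < 2 * L" using assms by auto
  then have "z = 0" using assms(1) by (simp add: abs_mult)
  then show ?thesis using assms(4) by simp
next
  case False
  then show ?thesis using hockey_stick_bounds[of eps s] hockey_stick_bounds[of eps r] by auto
qed

lemma abs_delta_exact_diff_fft_le:
  assumes "L > 0" "n > 0" "even n" "\<And>i j. i \<in> {1..k} \<Longrightarrow> j < n \<Longrightarrow> a i j \<ge> 0"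
  shows "cmod (complex_of_real (delta_exact L n k a C eps) - delta_fft L n k a C eps)
    \<le> (\<Sum>js\<in>{1..k} \<rightarrow>\<^sub>E {..<n}. atom_mass k a js * of_bool (atom_pos L n k js \<notin> {-L..<L}))"
proof -
  define J where "J = {1..k} \<rightarrow>\<^sub>E {..<n}"
  define err where "err js = hockey_stick eps (atom_pos L n k js) - hockey_stick eps (grid L n (alias_index n k js))" for js
  have "cmod (complex_of_real (delta_exact L n k a C eps) - delta_fft L n k a C eps)
      = \<bar>delta_exact L n k a C eps - (C + (\<Sum>js\<in>J. atom_mass k a js * hockey_stick eps (grid L n (alias_index n k js))))\<bar>"
    unfolding delta_fft_eq[OF assms(2)] of_real_diff[symmetric] norm_of_real J_def ..
  also have "\<dots> = \<bar>\<Sum>js\<in>J. atom_mass k a js * err js\<bar>"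
    unfolding delta_exact_eq err_def J_def by (simp add: sum_subtractf right_diff_distrib)
  also have "\<dots> \<le> (\<Sum>js\<in>J. \<bar>atom_mass k a js * err js\<bar>)"
    by (rule sum_abs)
  also have "\<dots> \<le> (\<Sum>js\<in>J. atom_mass k a js * of_bool (atom_pos L n k js \<notin> {-L..<L}))"
  proof (rule sum_mono)
    fix js assume js: "js \<in> J"
    note idx = alias_index_less[OF assms(2), of k js]
    obtain z where z: "grid L n (alias_index n k js) = atom_pos L n k js + 2 * L * of_int z"
      using grid_alias_index[OF assms(2,3)] by blast
    have err: "\<bar>err js\<bar> \<le> of_bool (atom_pos L n k js \<notin> {-L..<L})"
      unfolding err_def by (rule abs_hockey_stick_diff_le[OF assms(1) grid_bounds[OF assms(1) idx] z])
    have mass: "atom_mass k a js \<ge> 0" using atom_mass_nonneg[of k n a js] assms(4) js unfolding J_def by blast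
    have "\<bar>atom_mass k a js * err js\<bar> = atom_mass k a js * \<bar>err js\<bar>"
      using mass by (simp add: abs_mult)
    also have "\<dots> \<le> atom_mass k a js * of_bool (atom_pos L n k js \<notin> {-L..<L})"
      using err mass by (rule mult_left_mono)
    finally show "\<bar>atom_mass k a js * err js\<bar> \<le> atom_mass k a js * of_bool (atom_pos L n k js \<notin> {-L..<L})" .
  qed
  finally show ?thesis unfolding J_def .
qed

lemma of_bool_outside_le_exp:
  fixes L s lam :: real
  assumes "lam \<ge> 0"
  shows "of_bool (s \<notin> {-L..<L}) \<le> exp (- L * lam) * (exp (lam * s) + exp (- lam * s))"
proof -
  have split: "exp (- L * lam) * (exp (lam * s) + exp (- lam * s)) = exp (lam * (s - L)) + exp (- lam * (s + L))"
    by (simp add: distrib_left exp_add[symmetric] algebra_simps)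
  show ?thesis
  proof (cases "s \<in> {-L..<L}")
    case False
    then consider "L \<le> s" | "s + L \<le> 0" by force
    then have "1 \<le> exp (lam * (s - L)) + exp (- lam * (s + L))"
    proof cases
      case 1
      then have "1 \<le> exp (lam * (s - L))" using assms by simp
      then show ?thesis using exp_gt_zero[of "- lam * (s + L)"] by linarith
    next
      case 2
      then have "1 \<le> exp (- lam * (s + L))" using assms by (simp add: mult_nonneg_nonpos)
      then show ?thesis using exp_gt_zero[of "lam * (s - L)"] by linarith
    qed
    then show ?thesis using False split by simp
  qed (simp add: add_nonneg_nonneg)
qed

lemma sum_atom_mass_exp:
  "(\<Sum>js\<in>{1..k} \<rightarrow>\<^sub>E {..<n}. atom_mass k a js * exp (mu * atom_pos L n k js))
    = (\<Prod>i\<in>{1..k}. \<Sum>j<n. a i j * exp (mu * grid L n j))"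
proof -
  have "(\<Prod>i\<in>{1..k}. \<Sum>j<n. a i j * exp (mu * grid L n j))
      = (\<Sum>js\<in>{1..k} \<rightarrow>\<^sub>E {..<n}. \<Prod>i\<in>{1..k}. a i (js i) * exp (mu * grid L n (js i)))"
    by (rule prod_sum_PiE) auto
  then show ?thesis
    by (simp add: prod.distrib atom_mass_def atom_pos_def sum_distrib_left exp_sum)
qed

lemma tail_mass_le_exp:
  assumes "lam \<ge> 0" "\<And>i j. i \<in> {1..k} \<Longrightarrow> j < n \<Longrightarrow> a i j \<ge> 0"
  shows "(\<Sum>js\<in>{1..k} \<rightarrow>\<^sub>E {..<n}. atom_mass k a js * of_bool (atom_pos L n k js \<notin> {-L..<L}))
    \<le> exp (- L * lam) * ((\<Prod>i\<in>{1..k}. \<Sum>j<n. a i j * exp (lam * grid L n j))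
                          + (\<Prod>i\<in>{1..k}. \<Sum>j<n. a i j * exp (- lam * grid L n j)))"
proof -
  define J where "J = {1..k} \<rightarrow>\<^sub>E {..<n}"
  have "(\<Sum>js\<in>J. atom_mass k a js * of_bool (atom_pos L n k js \<notin> {-L..<L}))
      \<le> (\<Sum>js\<in>J. atom_mass k a js * (exp (- L * lam)
            * (exp (lam * atom_pos L n k js) + exp (- lam * atom_pos L n k js))))"
    using atom_mass_nonneg[of k n a] assms unfolding J_def
    by (intro sum_mono mult_left_mono of_bool_outside_le_exp) auto
  also have "\<dots> = exp (- L * lam) * ((\<Sum>js\<in>J. atom_mass k a js * exp (lam * atom_pos L n k js))
                          + (\<Sum>js\<in>J. atom_mass k a js * exp (- lam * atom_pos L n k js)))"
    by (simp add: sum_distrib_left sum.distrib algebra_simps)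
  finally show ?thesis unfolding J_def sum_atom_mass_exp .
qed

lemma prod_le_exp_sum_ln:
  fixes X :: "'a \<Rightarrow> real"
  assumes "finite A" "\<And>i. i \<in> A \<Longrightarrow> X i \<ge> 0"
  shows "(\<Prod>i\<in>A. X i) \<le> exp (\<Sum>i\<in>A. ln (X i))"
proof (cases "\<forall>i\<in>A. X i > 0")
  case True
  then show ?thesis using assms(1) by (simp add: exp_sum)
next
  case False
  then have "(\<Prod>i\<in>A. X i) = 0" using assms by (force intro: prod_zero)
  then show ?thesis by simp
qed

theorem theorem7:
  fixes L C eps lam :: real and n k :: nat and a :: "nat \<Rightarrow> nat \<Rightarrow> real"
  assumes "L > 0" and "n > 0" and "even n" and "k \<ge> 1"
    and "\<And>i j. i \<in> {1..k} \<Longrightarrow> j < n \<Longrightarrow> a i j \<ge> 0"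
    and "0 \<le> C" and "C \<le> 1"
    and "eps > 0" and "lam > 0"
  shows "cmod (complex_of_real (delta_exact L n k a C eps) - delta_fft L n k a C eps)
         \<le> (exp (alpha_plus L n k a lam) + exp (alpha_minus L n k a lam))
           * (exp (- L * lam) / (1 - exp (- 2 * L * lam)))"
proof -
  have "cmod (complex_of_real (delta_exact L n k a C eps) - delta_fft L n k a C eps)
      \<le> exp (- L * lam) * ((\<Prod>i\<in>{1..k}. \<Sum>j<n. a i j * exp (lam * grid L n j))
                          + (\<Prod>i\<in>{1..k}. \<Sum>j<n. a i j * exp (- lam * grid L n j)))"
    by (rule order.trans[OF abs_delta_exact_diff_fft_le[OF assms(1-3,5)]
                            tail_mass_le_exp[OF less_imp_le[OF assms(9)] assms(5)]])
  also have "\<dots> \<le> exp (- L * lam) * (exp (alpha_plus L n k a lam) + exp (alpha_minus L n k a lam))"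
    unfolding alpha_plus_def alpha_minus_def using assms(5)
    by (intro mult_left_mono add_mono prod_le_exp_sum_ln) (auto intro!: sum_nonneg)
  also have "\<dots> \<le> exp (- L * lam) / (1 - exp (- 2 * L * lam)) * (exp (alpha_plus L n k a lam) + exp (alpha_minus L n k a lam))"
  proof (rule mult_right_mono)
    have "0 < exp (- 2 * L * lam)" "exp (- 2 * L * lam) < 1" using assms(1,9) by simp_all
    then show "exp (- L * lam) \<le> exp (- L * lam) / (1 - exp (- 2 * L * lam))"
      by (simp add: le_divide_eq)
  qed (simp add: add_nonneg_nonneg)
  finally show ?thesis by (simp only: mult.commute)
qed

end
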